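(* Let the setting, algorithm and $M_1$ be as in the context, and suppose $c_k\le1$ for all $k$. Then for all $k\ge0$, $$\|\mathbf g^k\|\le\|\mathbf g^k-\mathbf W^\infty\mathbf g^k\|+L_1\|\mathbf x^k-\mathbf W^\infty\mathbf x^k\|+\sqrt n\|\nabla F(\bar x^k)\|.$$ Moreover, if for some $k_0\ge0$ it holds that $M_1I_d\preceq H_i^{k_0}+MI_d\preceq M_2I_d$ for all $i$, then $$\|\mathbf x^{k_0+1}-\mathbf x^{k_0}\|\le\Big(2+\frac{2\alpha L_1}{M_1}\Big)\|\mathbf x^{k_0}-\mathbf W^\infty\mathbf x^{k_0}\|+\frac{2\alpha}{M_1}\|\mathbf g^{k_0}-\mathbf W^\infty\mathbf g^{k_0}\|+\frac{2\alpha\sqrt n}{M_1}\|\nabla F(\bar x^{k_0})\|.$$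
   Context: Setting. $n,d\ge1$; $W\in\mathbb{R}^{n\times n}$ is entrywise nonnegative, symmetric, $W1_n=1_n$, with $w_{ij}=0$ iff $j$ is neither $i$ nor a neighbor of $i$ in an undirected connected graph; $\sigma=\|W-\frac1n1_n1_n^T\|<1$. Each $f_i:\mathbb{R}^d\to\mathbb{R}$ is $C^2$ with $L_1$-Lipschitz gradient and $L_2$-Lipschitz Hessian; $F=\frac1n\sum_if_i$ with $\nabla^2F\succeq\mu I_d$, $\mu>0$, minimizer $x^*$. $\mathcal Q:\mathbb{R}^{d\times d}\to\mathbb{R}^{d\times d}$ deterministic with $\|\mathcal Q(A)-A\|_F\le(1-\delta)\|A\|_F$, $\delta\in(0,1]$, applied blockwise. Notation: $\mathbf x=[x_1;\dots;x_n]$, $\bar x=\frac1n\sum x_i$; $\mathbf H=[H_1;\dots;H_n]$; $\mathbf W=W\otimes I_d$, $\mathbf W^\infty=\frac1n1_n1_n^T\otimes I_d$; $\nabla f(\mathbf x)=[\nabla f_i(x_i)]_i$, $\nabla^2 f(\mathbf x)=[\nabla^2f_i(x_i)]_i$. Algorithm: arbitrary $\mathbf x^0$, $g_i^0=\nabla f_i(x_i^0)$, $H_i^0=\nabla^2 f_i(x_i^0)$, arbitrary $\mathbf E^0,\tilde{\mathbf H}^0$, $\alpha,\gamma>0$, integer $m\ge1$, $M\ge0$, $c_k\in[0,1]$; for $k\ge0$: $\mathbf x^{k+1}=\mathbf W^m(\mathbf x^k-\alpha\mathbf d^k)$; $\mathbf g^{k+1}=\mathbf W^m(\mathbf g^k+\nabla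 f(\mathbf x^{k+1})-\nabla f(\mathbf x^k))$; $\mathbf E^{k+1}=\mathbf E^k+\mathbf H^k-\tilde{\mathbf H}^k-\mathcal Q(\mathbf E^k+\mathbf H^k-\tilde{\mathbf H}^k)$; $\tilde{\mathbf H}^{k+1}=\tilde{\mathbf H}^k+\mathcal Q(\mathbf H^k-\tilde{\mathbf H}^k)$; $\hat{\mathbf H}^k=\tilde{\mathbf H}^k+\mathcal Q(\mathbf E^k+\mathbf H^k-\tilde{\mathbf H}^k)$; $\mathbf H^{k+1}=\mathbf H^k-\gamma(I_{nd}-\mathbf W)\hat{\mathbf H}^k+\nabla^2f(\mathbf x^{k+1})-\nabla^2f(\mathbf x^k)$; $\mathbf d^k$ satisfies $(\mathrm{diag}\{H_i^k\}+MI_{nd})\mathbf d^k=\mathbf g^k+\mathbf r^k$, $\|\mathbf r^k\|\le c_k\|\mathbf g^k\|$. Constants: $u_1^0=\|\mathbf x^0-\mathbf W^\infty\mathbf x^0\|^2+\frac{(1-\sigma^2)^2}{50L_1^2}\|\mathbf g^0-\mathbf W^\infty\mathbf g^0\|^2+2\sigma^{m-1}\frac n{L_1}(F(\bar x^0)-F(x^* ))$; $u_2^0=\frac{\delta(1-\sigma)}{8(1-\delta)}\|\mathbf E^0\|_F+\frac{1-\sigma}4\|\mathbf H^0-\tilde{\mathbf H}^0\|_F+\|\mathbf H^0-\mathbf W^\infty\mathbf H^0\|_F$; $C=\frac{3.75L_2\sqrt{\sigma^{-(m-1)}u_1^0}}{\sqrt{1-\mu\alpha/(2M_2)}-(1-\gamma(1-\sigma)/2)}$;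 $\tilde u_2^0=\max\{u_2^0-C,C\}$; $M_1=\mu+M-L_2\sqrt{u_1^0/n}-\tilde u_2^0$; $M_2=L_1+M+L_2\sqrt{u_1^0/n}+\tilde u_2^0$ (assumed $M_2\ge M_1>0$). *)

theory Defs
  imports "HOL-Analysis.Analysis"
begin

text \<open>Agents are indexed by a finite type 'n (n = CARD('n)), coordinates by a finite
type 'd (d = CARD('d)).  A stacked vector [x_1;...;x_n] is an element of real^'d^'n,
whose norm is exactly the Euclidean norm of the stacked vector.  A stacked matrix
[H_1;...;H_n] is an element of real^'d^'d^'n, whose norm is exactly the Frobenius norm.\<close>

primrec matpow :: "real^'n^'n \<Rightarrow> nat \<Rightarrow> real^'n^'n" where
  "matpow W 0 = mat 1"
| "matpow W (Suc k) = matpow W k ** W"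

text \<open>Blockwise action of (A kron I): (A kron I) x, for stacked vectors or stacked matrices.\<close>
definition bmul :: "real^'n^'n \<Rightarrow> ('a::real_vector)^'n \<Rightarrow> 'a^'n" where
  "bmul A x = (\<chi> i. \<Sum>j\<in>UNIV. (A $ i $ j) *\<^sub>R (x $ j))"

text \<open>Average of the blocks, and W-infinity = (1/n) 1 1^T kron I.\<close>
definition avg :: "('a::real_vector)^'n \<Rightarrow> 'a" where
  "avg x = (1 / real CARD('n)) *\<^sub>R (\<Sum>i\<in>UNIV. x $ i)"

definition Winf :: "('a::real_vector)^'n \<Rightarrow> 'a^'n" where
  "Winf x = (\<chi> i. avg x)"

definition Jmat :: "real^'n^'n" where
  "Jmat = (\<chi> i j. 1 / real CARD('n))"

definition loewner_le :: "real^'d^'d \<Rightarrow> real^'d^'d \<Rightarrow> bool" where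
  "loewner_le A B \<longleftrightarrow> (\<forall>v. v \<bullet> (A *v v) \<le> v \<bullet> (B *v v))"

definition mixing_matrix :: "real^'n^'n \<Rightarrow> bool" where
  "mixing_matrix W \<longleftrightarrow>
     (\<forall>i j. W $ i $ j \<ge> 0) \<and> (\<forall>i j. W $ i $ j = W $ j $ i) \<and>
     (\<forall>i. (\<Sum>j\<in>UNIV. W $ i $ j) = 1) \<and>
     (\<exists>E :: 'n \<Rightarrow> 'n \<Rightarrow> bool.
        (\<forall>i j. E i j \<longleftrightarrow> E j i) \<and> (\<forall>i. \<not> E i i) \<and> (\<forall>i j. E\<^sup>*\<^sup>* i j) \<and>
        (\<forall>i j. W $ i $ j = 0 \<longleftrightarrow> (j \<noteq> i \<and> \<not> E i j)))"

end

theory Submission imports Defs begin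

text \<open>Gradient tracking preserves averages, so the average of the trackers g^k equals the
average of the local gradients at x_i^k; by Lipschitz continuity this differs from the
gradient of F at the average x_bar^k by at most L1 / sqrt n times the consensus error
|x^k - W_inf x^k|.  Splitting g^k into its consensus part W_inf g^k, of norm
sqrt n |avg g^k|, and the deviation gives the first bound.  For the second,
M1 I <= H_i + M I together with |r^k| <= |g^k| yields M1 |d^k| <= 2 |g^k|, and since W^m is
doubly stochastic it fixes consensus vectors and is nonexpansive, whence
|x^(k+1) - x^k| <= 2 |x^k - W_inf x^k| + alpha |d^k|.\<close>

definition doubly_stochastic :: "real^'n^'n \<Rightarrow> bool" where
  "doubly_stochastic A \<longleftrightarrow> (\<forall>i j. A $ i $ j \<ge> 0) \<and> (\<forall>i. (\<Sum>j\<in>UNIV. A $ i $ j) = 1)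
     \<and> (\<forall>j. (\<Sum>i\<in>UNIV. A $ i $ j) = 1)"

lemma doubly_stochastic_matpow:
  assumes "mixing_matrix W"
  shows "doubly_stochastic (matpow W k)"
proof (induction k)
  case 0
  show ?case by (simp add: doubly_stochastic_def mat_def)
next
  case (Suc k)
  let ?P = "matpow W k"
  have P_nonneg: "\<And>i j. ?P $ i $ j \<ge> 0" and P_rows: "\<And>i. (\<Sum>j\<in>UNIV. ?P $ i $ j) = 1"
    and P_cols: "\<And>j. (\<Sum>i\<in>UNIV. ?P $ i $ j) = 1"
    using Suc by (auto simp: doubly_stochastic_def)
  have W_nonneg: "\<And>i j. W $ i $ j \<ge> 0" and W_rows: "\<And>i. (\<Sum>j\<in>UNIV. W $ i $ j) = 1"
    and W_sym: "\<And>i j. W $ i $ j = W $ j $ i"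
    using assms by (auto simp: mixing_matrix_def)
  have W_cols: "(\<Sum>i\<in>UNIV. W $ i $ j) = 1" for j
    using W_rows[of j] W_sym by simp
  have "(?P ** W) $ i $ j \<ge> 0" for i j
    by (simp add: matrix_matrix_mult_def sum_nonneg P_nonneg W_nonneg)
  moreover have "(\<Sum>j\<in>UNIV. (?P ** W) $ i $ j) = 1" for i
    unfolding matrix_matrix_mult_def
    by (simp add: sum.swap[where A = UNIV] sum_distrib_left[symmetric] W_rows P_rows)
  moreover have "(\<Sum>i\<in>UNIV. (?P ** W) $ i $ j) = 1" for j
    unfolding matrix_matrix_mult_def
    by (simp add: sum.swap[where A = UNIV] sum_distrib_right[symmetric] W_cols P_cols)
  ultimately show ?case by (simp add: doubly_stochastic_def)
qed

lemma norm_vec_power2: "(norm (v::('a::real_normed_vector)^'n))\<^sup>2 = (\<Sum>i\<in>UNIV. (norm (v $ i))\<^sup>2)"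
  by (simp add: norm_vec_def L2_set_def sum_nonneg)

lemma weighted_mean_power2_le:
  fixes w t :: "'i \<Rightarrow> real"
  assumes "\<And>j. j \<in> J \<Longrightarrow> w j \<ge> 0" "(\<Sum>j\<in>J. w j) = 1"
  shows "(\<Sum>j\<in>J. w j * t j)\<^sup>2 \<le> (\<Sum>j\<in>J. w j * (t j)\<^sup>2)"
proof -
  have sqrt_w: "sqrt (w j) * sqrt (w j) = w j" if "j \<in> J" for j
    using assms(1)[OF that] by simp
  have "(\<Sum>j\<in>J. sqrt (w j) * (sqrt (w j) * t j))\<^sup>2
      \<le> (\<Sum>j\<in>J. (sqrt (w j))\<^sup>2) * (\<Sum>j\<in>J. (sqrt (w j) * t j)\<^sup>2)"
    by (rule Cauchy_Schwarz_ineq_sum)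
  also have "(\<Sum>j\<in>J. sqrt (w j) * (sqrt (w j) * t j)) = (\<Sum>j\<in>J. w j * t j)"
    by (rule sum.cong) (simp_all add: mult.assoc[symmetric] sqrt_w abs_of_nonneg assms(1))
  also have "(\<Sum>j\<in>J. (sqrt (w j))\<^sup>2) = 1"
    using assms by (simp add: power2_eq_square sqrt_w)
  also have "(\<Sum>j\<in>J. (sqrt (w j) * t j)\<^sup>2) = (\<Sum>j\<in>J. w j * (t j)\<^sup>2)"
    by (rule sum.cong) (simp_all add: power_mult_distrib power2_eq_square sqrt_w abs_of_nonneg assms(1))
  finally show ?thesis by simp
qed

lemma norm_bmul_le:
  fixes A :: "real^'n^'n" and v :: "('a::real_normed_vector)^'n"
  assumes "doubly_stochastic A"
  shows "norm (bmul A v) \<le> norm v"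
proof -
  have nonneg: "\<And>i j. A $ i $ j \<ge> 0" and rows: "\<And>i. (\<Sum>j\<in>UNIV. A $ i $ j) = 1"
    and cols: "\<And>j. (\<Sum>i\<in>UNIV. A $ i $ j) = 1"
    using assms by (auto simp: doubly_stochastic_def)
  have block: "(norm (bmul A v $ i))\<^sup>2 \<le> (\<Sum>j\<in>UNIV. A $ i $ j * (norm (v $ j))\<^sup>2)" for i
  proof -
    have "norm (bmul A v $ i) \<le> (\<Sum>j\<in>UNIV. norm ((A $ i $ j) *\<^sub>R (v $ j)))"
      unfolding bmul_def vec_lambda_beta by (rule norm_sum)
    also have "\<dots> = (\<Sum>j\<in>UNIV. A $ i $ j * norm (v $ j))"
      using nonneg by simp
    finally have "(norm (bmul A v $ i))\<^sup>2 \<le> (\<Sum>j\<in>UNIV. A $ i $ j * norm (v $ j))\<^sup>2"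
      by (rule power_mono) simp
    also have "\<dots> \<le> (\<Sum>j\<in>UNIV. A $ i $ j * (norm (v $ j))\<^sup>2)"
      by (rule weighted_mean_power2_le) (use nonneg rows in auto)
    finally show ?thesis .
  qed
  have "(norm (bmul A v))\<^sup>2 \<le> (\<Sum>i\<in>UNIV. \<Sum>j\<in>UNIV. A $ i $ j * (norm (v $ j))\<^sup>2)"
    unfolding norm_vec_power2 by (rule sum_mono) (rule block)
  also have "\<dots> = (\<Sum>j\<in>UNIV. (\<Sum>i\<in>UNIV. A $ i $ j) * (norm (v $ j))\<^sup>2)"
    by (subst sum.swap) (simp add: sum_distrib_right)
  also have "\<dots> = (norm v)\<^sup>2"
    by (simp add: cols norm_vec_power2)
  finally show ?thesis by (rule power2_le_imp_le) simp
qed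

lemma bmul_diff: "bmul A (x - y) = bmul A x - bmul A (y::('a::real_vector)^'n)"
  by (simp add: bmul_def vec_eq_iff scaleR_diff_right sum_subtractf)

lemma bmul_scaleR: "bmul A (a *\<^sub>R y) = a *\<^sub>R bmul A (y::('a::real_vector)^'n)"
  by (simp add: bmul_def vec_eq_iff scaleR_sum_right mult.commute)

lemma bmul_Winf:
  assumes "doubly_stochastic A"
  shows "bmul A (Winf x) = Winf (x::('a::real_vector)^'n)"
  using assms by (simp add: bmul_def Winf_def vec_eq_iff doubly_stochastic_def scaleR_sum_left[symmetric])

lemma avg_bmul:
  assumes "doubly_stochastic A"
  shows "avg (bmul A x) = avg (x::('a::real_vector)^'n)"
proof -
  have "(\<Sum>i\<in>UNIV. bmul A x $ i) = (\<Sum>j\<in>UNIV. (\<Sum>i\<in>UNIV. A $ i $ j) *\<^sub>R x $ j)"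
    by (simp add: bmul_def scaleR_sum_left) (rule sum.swap)
  then show ?thesis
    using assms by (simp add: avg_def doubly_stochastic_def)
qed

lemma avg_add: "avg (x + y) = avg x + avg (y::('a::real_vector)^'n)"
  by (simp add: avg_def sum.distrib scaleR_add_right)

lemma avg_diff: "avg (x - y) = avg x - avg (y::('a::real_vector)^'n)"
  by (simp add: avg_def sum_subtractf scaleR_diff_right)

lemma norm_Winf: "norm (Winf (x::('a::real_normed_vector)^'n)) = sqrt (real CARD('n)) * norm (avg x)"
proof -
  have "(norm (Winf x))\<^sup>2 = real CARD('n) * (norm (avg x))\<^sup>2"
    by (simp add: norm_vec_power2 Winf_def)
  then show ?thesis
    by (metis norm_ge_zero real_sqrt_abs real_sqrt_mult abs_norm_cancel)
qed

lemma sum_norm_deviation_le: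
  fixes x :: "('a::real_normed_vector)^'n"
  shows "(\<Sum>i\<in>UNIV. norm (x $ i - avg x)) \<le> sqrt (real CARD('n)) * norm (x - Winf x)"
proof -
  have "(\<Sum>i\<in>UNIV. norm (x $ i - avg x))\<^sup>2 \<le> (\<Sum>i\<in>UNIV. (norm (x $ i - avg x))\<^sup>2) * CARD('n)"
    by (rule sum_squared_le_sum_of_squares)
  also have "(\<Sum>i\<in>UNIV. (norm (x $ i - avg x))\<^sup>2) = (norm (x - Winf x))\<^sup>2"
    unfolding norm_vec_power2[of "x - Winf x"] by (simp add: Winf_def)
  also have "(norm (x - Winf x))\<^sup>2 * CARD('n) = (sqrt (real CARD('n)) * norm (x - Winf x))\<^sup>2"
    by (simp add: power_mult_distrib)
  finally show ?thesis
    by (rule power2_le_imp_le) simp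
qed

lemma avg_tracking:
  assumes "doubly_stochastic P" "g 0 = G 0"
    and "\<And>k. g (Suc k) = bmul P (g k + G (Suc k) - G k)"
  shows "avg (g k) = avg (G k :: ('a::real_vector)^'n)"
proof (induction k)
  case 0
  show ?case using assms(2) by simp
next
  case (Suc k)
  then show ?case
    by (simp add: assms(3) avg_bmul[OF assms(1)] avg_add avg_diff)
qed

lemma lipschitz_constant_nonneg:
  fixes \<phi> :: "'a::euclidean_space \<Rightarrow> 'b::real_normed_vector"
  assumes "\<And>y z. norm (\<phi> y - \<phi> z) \<le> L * norm (y - z)"
  shows "0 \<le> L"
proof -
  obtain b :: 'a where "b \<in> Basis"
    using nonempty_Basis by blast
  then have "norm (b - 0) = 1" by simp
  moreover have "0 \<le> L * norm (b - 0)"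
    using assms[of b 0] norm_ge_zero order_trans by blast
  ultimately show ?thesis by simp
qed

lemma norm_avg_lipschitz_deviation:
  fixes \<phi> :: "'n::finite \<Rightarrow> 'a::real_normed_vector \<Rightarrow> 'b::real_normed_vector"
  assumes lip: "\<And>i y z. norm (\<phi> i y - \<phi> i z) \<le> L * norm (y - z)" and "0 \<le> L"
  shows "sqrt (real CARD('n)) * norm (avg (\<chi> i. \<phi> i (x $ i)) - avg (\<chi> i. \<phi> i (avg x)))
           \<le> L * norm (x - Winf x)"
proof -
  define n where "n = real CARD('n)"
  have "sqrt n * sqrt n = n" "n > 0" unfolding n_def by simp_all
  have "avg (\<chi> i. \<phi> i (x $ i)) - avg (\<chi> i. \<phi> i (avg x))
      = (1 / n) *\<^sub>R (\<Sum>i\<in>UNIV. \<phi> i (x $ i) - \<phi> i (avg x))"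
    by (simp add: avg_def n_def sum_subtractf scaleR_diff_right)
  then have "n * norm (avg (\<chi> i. \<phi> i (x $ i)) - avg (\<chi> i. \<phi> i (avg x)))
      = norm (\<Sum>i\<in>UNIV. \<phi> i (x $ i) - \<phi> i (avg x))"
    using \<open>n > 0\<close> by simp
  also have "\<dots> \<le> (\<Sum>i\<in>UNIV. L * norm (x $ i - avg x))"
    by (rule order_trans[OF norm_sum sum_mono]) (rule lip)
  also have "\<dots> \<le> L * (sqrt n * norm (x - Winf x))"
    unfolding sum_distrib_left[symmetric] n_def
    by (rule mult_left_mono[OF sum_norm_deviation_le \<open>0 \<le> L\<close>])
  finally show ?thesis
    using \<open>sqrt n * sqrt n = n\<close> \<open>n > 0\<close> unfolding n_def[symmetric]
    by (smt (verit) mult.assoc mult.commute mult_le_cancel_left_pos real_sqrt_gt_0_iff)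
qed

lemma norm_tracker_le:
  fixes \<phi> :: "'n::finite \<Rightarrow> 'a::real_normed_vector \<Rightarrow> 'b::real_normed_vector"
    and v :: "'b^'n"
  assumes "avg v = avg (\<chi> i. \<phi> i (x $ i))"
    and "\<And>i y z. norm (\<phi> i y - \<phi> i z) \<le> L * norm (y - z)" "0 \<le> L"
  shows "norm v \<le> norm (v - Winf v) + L * norm (x - Winf x)
           + sqrt (real CARD('n)) * norm ((1 / real CARD('n)) *\<^sub>R (\<Sum>i\<in>UNIV. \<phi> i (avg x)))"
proof -
  let ?s = "sqrt (real CARD('n))" and ?a = "avg (\<chi> i. \<phi> i (avg x))"
  have "norm v \<le> norm (v - Winf v) + norm (Winf v)"
    using norm_triangle_ineq[of "v - Winf v" "Winf v"] by simp
  also have "norm (Winf v) = ?s * norm (avg v)"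
    by (rule norm_Winf)
  also have "\<dots> \<le> ?s * norm (avg v - ?a) + ?s * norm ?a"
    using norm_triangle_ineq[of "avg v - ?a" ?a]
    by (simp add: distrib_left[symmetric] mult_left_mono)
  also have "?s * norm (avg v - ?a) \<le> L * norm (x - Winf x)"
    unfolding assms(1) by (rule norm_avg_lipschitz_deviation[OF assms(2,3)])
  finally show ?thesis
    by (simp add: avg_def)
qed

lemma norm_le_of_loewner_lower:
  assumes "loewner_le (\<mu> *\<^sub>R mat 1) A"
  shows "\<mu> * norm v \<le> norm (A *v v)"
proof (cases "v = 0")
  case False
  have "\<mu> * (norm v)\<^sup>2 = v \<bullet> ((\<mu> *\<^sub>R mat 1) *v v)"
    by (simp add: scaleR_matrix_vector_assoc[symmetric] power2_norm_eq_inner)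
  also have "\<dots> \<le> v \<bullet> (A *v v)"
    using assms by (simp add: loewner_le_def)
  also have "\<dots> \<le> norm v * norm (A *v v)"
    by (rule norm_cauchy_schwarz)
  finally have "norm v * (\<mu> * norm v) \<le> norm v * norm (A *v v)"
    by (simp add: power2_eq_square mult_ac)
  then show ?thesis using False by simp
qed simp

lemma blockwise_norm_lower_bound:
  fixes u :: "('a::real_normed_vector)^'n" and v :: "('b::real_normed_vector)^'n"
  assumes "\<And>i. a * norm (u $ i) \<le> norm (v $ i)" "0 \<le> a"
  shows "a * norm u \<le> norm v"
proof -
  have "(a * norm u)\<^sup>2 = (\<Sum>i\<in>UNIV. (a * norm (u $ i))\<^sup>2)"
    by (simp add: power_mult_distrib norm_vec_power2 sum_distrib_left)
  also have "\<dots> \<le> (\<Sum>i\<in>UNIV. (norm (v $ i))\<^sup>2)"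
    by (rule sum_mono, rule power_mono) (use assms in auto)
  also have "\<dots> = (norm v)\<^sup>2"
    by (simp add: norm_vec_power2)
  finally show ?thesis by (rule power2_le_imp_le) simp
qed

lemma inexact_newton_direction_bound:
  fixes A :: "'n::finite \<Rightarrow> real^'d^'d" and d g r :: "real^'d^'n"
  assumes "\<And>i. loewner_le (\<mu> *\<^sub>R mat 1) (A i)" "0 \<le> \<mu>"
    and "\<And>i. A i *v (d $ i) = g $ i + r $ i"
    and "norm r \<le> c * norm g" "c \<le> 1"
  shows "\<mu> * norm d \<le> 2 * norm g"
proof -
  have "\<mu> * norm d \<le> norm (g + r)"
    by (rule blockwise_norm_lower_bound[OF _ \<open>0 \<le> \<mu>\<close>])
      (metis assms(1,3) norm_le_of_loewner_lower vector_add_component)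
  also have "\<dots> \<le> norm g + c * norm g"
    using norm_triangle_ineq[of g r] assms(4) by simp
  also have "\<dots> \<le> 2 * norm g"
    using mult_right_mono[OF \<open>c \<le> 1\<close> norm_ge_zero[of g]] by simp
  finally show ?thesis .
qed

lemma consensus_step_bound:
  fixes x d :: "('a::real_normed_vector)^'n"
  assumes "doubly_stochastic P" "0 \<le> \<alpha>"
  shows "norm (bmul P (x - \<alpha> *\<^sub>R d) - x) \<le> 2 * norm (x - Winf x) + \<alpha> * norm d"
proof -
  let ?y = "x - Winf x"
  have "bmul P (x - \<alpha> *\<^sub>R d) - x = (bmul P ?y - ?y) - \<alpha> *\<^sub>R bmul P d"
    by (simp add: bmul_diff bmul_scaleR bmul_Winf[OF assms(1)])
  then have "norm (bmul P (x - \<alpha> *\<^sub>R d) - x) \<le> norm (bmul P ?y - ?y) + norm (\<alpha> *\<^sub>R bmul P d)"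
    by (metis norm_triangle_ineq4)
  also have "\<dots> \<le> norm (bmul P ?y) + norm ?y + \<alpha> * norm (bmul P d)"
    using norm_triangle_ineq4[of "bmul P ?y" ?y] assms(2) by simp
  also have "\<dots> \<le> 2 * norm ?y + \<alpha> * norm d"
    using norm_bmul_le[OF assms(1), of ?y] mult_left_mono[OF norm_bmul_le[OF assms(1), of d] assms(2)]
    by simp
  finally show ?thesis .
qed

theorem lemma2:
  fixes W :: "real^'n^'n"
    and f :: "'n \<Rightarrow> real^'d \<Rightarrow> real"
    and grad :: "'n \<Rightarrow> real^'d \<Rightarrow> real^'d"
    and hess :: "'n \<Rightarrow> real^'d \<Rightarrow> real^'d^'d"
    and L1 L2 mu :: real and xstar :: "real^'d"
    and Q :: "real^'d^'d \<Rightarrow> real^'d^'d" and delta :: real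
    and alpha gamma M :: real and m :: nat and c :: "nat \<Rightarrow> real"
    and x g d r :: "nat \<Rightarrow> real^'d^'n"
    and E Ht H :: "nat \<Rightarrow> real^'d^'d^'n"
    and u1 u2 u2t C M1 M2 :: real
  assumes W: "mixing_matrix W"
    and sigma_lt: "onorm (\<lambda>v. (W - Jmat) *v v) < 1"
    and f_deriv: "\<And>i y. (f i has_derivative (\<lambda>h. grad i y \<bullet> h)) (at y)"
    and grad_deriv: "\<And>i y. (grad i has_derivative (\<lambda>h. hess i y *v h)) (at y)"
    and hess_cont: "\<And>i. continuous_on UNIV (hess i)"
    and L1_lip: "\<And>i y z. norm (grad i y - grad i z) \<le> L1 * norm (y - z)"
    and L2_lip: "\<And>i y z. onorm (\<lambda>v. (hess i y - hess i z) *v v) \<le> L2 * norm (y - z)"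
    and mu_pos: "mu > 0"
    and strong: "\<And>y v. v \<bullet> (((1 / real CARD('n)) *\<^sub>R (\<Sum>i\<in>UNIV. hess i y)) *v v) \<ge> mu * (norm v)\<^sup>2"
    and xstar_min: "\<And>y. (1 / real CARD('n)) * (\<Sum>i\<in>UNIV. f i xstar) \<le> (1 / real CARD('n)) * (\<Sum>i\<in>UNIV. f i y)"
    and delta: "0 < delta" "delta \<le> 1"
    and Q_contr: "\<And>A. norm (Q A - A) \<le> (1 - delta) * norm A"
    and alpha_pos: "alpha > 0" and gamma_pos: "gamma > 0" and m_pos: "m \<ge> 1" and M_nonneg: "M \<ge> 0"
    and c_range: "\<And>k. 0 \<le> c k \<and> c k \<le> 1"
    and g0: "g 0 = (\<chi> i. grad i (x 0 $ i))"
    and H0: "H 0 = (\<chi> i. hess i (x 0 $ i))"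
    and x_step: "\<And>k. x (Suc k) = bmul (matpow W m) (x k - alpha *\<^sub>R d k)"
    and g_step: "\<And>k. g (Suc k) = bmul (matpow W m)
                   (g k + (\<chi> i. grad i (x (Suc k) $ i)) - (\<chi> i. grad i (x k $ i)))"
    and E_step: "\<And>k. E (Suc k) = (\<chi> i. E k $ i + H k $ i - Ht k $ i - Q (E k $ i + H k $ i - Ht k $ i))"
    and Ht_step: "\<And>k. Ht (Suc k) = (\<chi> i. Ht k $ i + Q (H k $ i - Ht k $ i))"
    and H_step: "\<And>k. H (Suc k) =
                   (let Hh = (\<chi> i. Ht k $ i + Q (E k $ i + H k $ i - Ht k $ i))
                    in H k - gamma *\<^sub>R (Hh - bmul W Hh)
                       + (\<chi> i. hess i (x (Suc k) $ i)) - (\<chi> i. hess i (x k $ i)))"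
    and d_eq: "\<And>k i. (H k $ i + M *\<^sub>R mat 1) *v (d k $ i) = g k $ i + r k $ i"
    and r_bound: "\<And>k. norm (r k) \<le> c k * norm (g k)"
    and u1_def: "u1 = (let \<sigma> = onorm (\<lambda>v. (W - Jmat) *v v) in
                   (norm (x 0 - Winf (x 0)))\<^sup>2
                   + (1 - \<sigma>\<^sup>2)\<^sup>2 / (50 * L1\<^sup>2) * (norm (g 0 - Winf (g 0)))\<^sup>2
                   + 2 * \<sigma> ^ (m - 1) * real CARD('n) / L1 *
                     ((1 / real CARD('n)) * (\<Sum>i\<in>UNIV. f i (avg (x 0)))
                      - (1 / real CARD('n)) * (\<Sum>i\<in>UNIV. f i xstar)))"
    and u2_def: "u2 = (let \<sigma> = onorm (\<lambda>v. (W - Jmat) *v v) in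
                   delta * (1 - \<sigma>) / (8 * (1 - delta)) * norm (E 0)
                   + (1 - \<sigma>) / 4 * norm (H 0 - Ht 0) + norm (H 0 - Winf (H 0)))"
    and C_def: "C = (let \<sigma> = onorm (\<lambda>v. (W - Jmat) *v v) in
                   (15 / 4) * L2 * sqrt (u1 / \<sigma> ^ (m - 1))
                   / (sqrt (1 - mu * alpha / (2 * M2)) - (1 - gamma * (1 - \<sigma>) / 2)))"
    and u2t_def: "u2t = max (u2 - C) C"
    and M1_def: "M1 = mu + M - L2 * sqrt (u1 / real CARD('n)) - u2t"
    and M2_def: "M2 = L1 + M + L2 * sqrt (u1 / real CARD('n)) + u2t"
    and M12: "M2 \<ge> M1" "M1 > 0"
  shows "(\<forall>k. norm (g k) \<le> norm (g k - Winf (g k)) + L1 * norm (x k - Winf (x k))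
                 + sqrt (real CARD('n)) * norm ((1 / real CARD('n)) *\<^sub>R (\<Sum>i\<in>UNIV. grad i (avg (x k)))))
       \<and> (\<forall>k0. (\<forall>i. loewner_le (M1 *\<^sub>R mat 1) (H k0 $ i + M *\<^sub>R mat 1)
                   \<and> loewner_le (H k0 $ i + M *\<^sub>R mat 1) (M2 *\<^sub>R mat 1)) \<longrightarrow>
            norm (x (Suc k0) - x k0)
              \<le> (2 + 2 * alpha * L1 / M1) * norm (x k0 - Winf (x k0))
                + 2 * alpha / M1 * norm (g k0 - Winf (g k0))
                + 2 * alpha * sqrt (real CARD('n)) / M1
                  * norm ((1 / real CARD('n)) *\<^sub>R (\<Sum>i\<in>UNIV. grad i (avg (x k0)))))"
proof -
  have P: "doubly_stochastic (matpow W m)"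
    using W by (rule doubly_stochastic_matpow)
  have "0 \<le> L1"
    using L1_lip by (rule lipschitz_constant_nonneg)
  have tracking: "avg (g k) = avg (\<chi> i. grad i (x k $ i))" for k
    by (rule avg_tracking[OF P]) (simp_all add: g0 g_step)
  have part1: "norm (g k) \<le> norm (g k - Winf (g k)) + L1 * norm (x k - Winf (x k))
                 + sqrt (real CARD('n)) * norm ((1 / real CARD('n)) *\<^sub>R (\<Sum>i\<in>UNIV. grad i (avg (x k))))" for k
    by (rule norm_tracker_le[OF tracking L1_lip \<open>0 \<le> L1\<close>])
  show ?thesis
  proof (intro conjI allI impI part1)
    fix k0
    let ?ex = "norm (x k0 - Winf (x k0))" and ?eg = "norm (g k0 - Winf (g k0))"
      and ?s = "sqrt (real CARD('n))"
      and ?gF = "norm ((1 / real CARD('n)) *\<^sub>R (\<Sum>i\<in>UNIV. grad i (avg (x k0))))"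
    assume "\<forall>i. loewner_le (M1 *\<^sub>R mat 1) (H k0 $ i + M *\<^sub>R mat 1)
                \<and> loewner_le (H k0 $ i + M *\<^sub>R mat 1) (M2 *\<^sub>R mat 1)"
    then have "M1 * norm (d k0) \<le> 2 * norm (g k0)"
      using M12 d_eq r_bound c_range
      by (intro inexact_newton_direction_bound[where A = "\<lambda>i. H k0 $ i + M *\<^sub>R mat 1"]) auto
    then have "alpha * norm (d k0) \<le> 2 * alpha / M1 * norm (g k0)"
      using alpha_pos M12 by (simp add: field_simps)
    moreover have "norm (x (Suc k0) - x k0) \<le> 2 * ?ex + alpha * norm (d k0)"
      unfolding x_step using P alpha_pos by (simp add: consensus_step_bound)
    moreover have "2 * alpha / M1 * norm (g k0) \<le> 2 * alpha / M1 * (?eg + L1 * ?ex + ?s * ?gF)"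
      using alpha_pos M12 by (intro mult_left_mono[OF part1]) simp
    ultimately have "norm (x (Suc k0) - x k0) \<le> 2 * ?ex + 2 * alpha / M1 * (?eg + L1 * ?ex + ?s * ?gF)"
      by linarith
    then show "norm (x (Suc k0) - x k0)
        \<le> (2 + 2 * alpha * L1 / M1) * ?ex + 2 * alpha / M1 * ?eg + 2 * alpha * ?s / M1 * ?gF"
      by (simp add: algebra_simps)
  qed
qed

end
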